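(* Let $\Pi$ be a policy class, $\pi_G$ a fixed goal-conditioned policy, $\rho^{e_1},\dots,\rho^{e_N}$ joint distributions over observations and goals ("source" distributions, $E=\{e_1,\dots,e_N\}$) and $\rho^t$ a "target" joint distribution. Write $\epsilon^{e_i}=\epsilon^{\rho^{e_i}}$ and $\epsilon^t=\epsilon^{\rho^t}$. For weights $\alpha=(\alpha_1,\dots,\alpha_N)$ with $\alpha_i\in[0,1]$, $\sum_i\alpha_i=1$, let $$\lambda_\alpha=\inf_{\pi'\in\Pi}\Big[\sum_{i=1}^N\alpha_i\epsilon^{e_i}(\pi'\|\pi_G)+\epsilon^t(\pi'\|\pi_G)\Big],$$ let $\delta_E=\max_{e,e'\in E}d_{\Pi\Delta\Pi}(\rho^e,\rho^{e'})$, and let $B=B(\delta_E,E\mid\Pi)$. Then for every $\pi\in\Pi$, $$\epsilon^t(\pi\|\pi_G)\le \inf_\alpha\Big[\sum_{i=1}^N\alpha_i\epsilon^{e_i}(\pi\|\pi_G)+\lambda_\alpha\Big]+\delta_E+\inf_{\rho\in B}d_{\Pi\Delta\Pi}(\rho,\rho^t).$$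
   Context: A goal-conditioned policy is a conditional distribution $\pi(a\mid x,g)$ over actions given an observation $x$ and goal $g$. $D_{\mathrm{TV}}(\pi_1(\cdot\mid x,g)\|\pi_2(\cdot\mid x,g))=\sup_{A'}|\pi_1(A'\mid x,g)-\pi_2(A'\mid x,g)|$ over measurable sets of actions $A'$. For a joint distribution $\rho(x,g)$, $\epsilon^{\rho}(\pi_1\|\pi_2)=\mathbb{E}_{(x,g)\sim\rho}[D_{\mathrm{TV}}(\pi_1(\cdot\mid x,g)\|\pi_2(\cdot\mid x,g))]$. For a policy class $\Pi$, $d_{\Pi\Delta\Pi}(\rho,\rho')=\sup_{\pi,\pi'\in\Pi}|\epsilon^{\rho}(\pi\|\pi')-\epsilon^{\rho'}(\pi\|\pi')|$. The characteristic set $B(\delta,E\mid\Pi)$ of a collection of joint distributions $\{\rho^{e_i}\}_{e_i\in E}$ is the set of all joint distributions $\rho(x,g)$ with $d_{\Pi\Delta\Pi}(\rho,\rho^{e_i})\le\delta$ for every $e_i\in E$. *)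

theory Defs
  imports "HOL-Probability.Probability"
begin

definition policy :: "'a measure \<Rightarrow> ('x \<Rightarrow> 'g \<Rightarrow> 'a measure) \<Rightarrow> bool" where
  "policy A \<pi> \<longleftrightarrow> (\<forall>x g. prob_space (\<pi> x g) \<and> sets (\<pi> x g) = sets A)"

definition joint_dist :: "('x \<times> 'g) measure \<Rightarrow> ('x \<times> 'g) measure \<Rightarrow> bool" where
  "joint_dist XG \<rho> \<longleftrightarrow> prob_space \<rho> \<and> sets \<rho> = sets XG"

definition dTV :: "'a measure \<Rightarrow> 'a measure \<Rightarrow> real" where
  "dTV \<mu> \<nu> = (SUP S\<in>sets \<mu>. \<bar>measure \<mu> S - measure \<nu> S\<bar>)"

definition eps :: "('x \<times> 'g) measure \<Rightarrow> ('x \<Rightarrow> 'g \<Rightarrow> 'a measure) \<Rightarrow> ('x \<Rightarrow> 'g \<Rightarrow> 'a measure) \<Rightarrow> real" where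
  "eps \<rho> \<pi>1 \<pi>2 = (\<integral>p. dTV (\<pi>1 (fst p) (snd p)) (\<pi>2 (fst p) (snd p)) \<partial>\<rho>)"

definition dPiDeltaPi :: "('x \<Rightarrow> 'g \<Rightarrow> 'a measure) set \<Rightarrow> ('x \<times> 'g) measure \<Rightarrow> ('x \<times> 'g) measure \<Rightarrow> real" where
  "dPiDeltaPi Pol \<rho> \<rho>' = (SUP pp\<in>Pol \<times> Pol. \<bar>eps \<rho> (fst pp) (snd pp) - eps \<rho>' (fst pp) (snd pp)\<bar>)"

definition char_set :: "('x \<times> 'g) measure \<Rightarrow> ('x \<Rightarrow> 'g \<Rightarrow> 'a measure) set \<Rightarrow> real \<Rightarrow> 'e set
    \<Rightarrow> ('e \<Rightarrow> ('x \<times> 'g) measure) \<Rightarrow> ('x \<times> 'g) measure set" where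
  "char_set XG Pol \<delta> E \<rho>s = {\<rho>. joint_dist XG \<rho> \<and> (\<forall>e\<in>E. dPiDeltaPi Pol \<rho> (\<rho>s e) \<le> \<delta>)}"

definition simplex_weights :: "nat \<Rightarrow> (nat \<Rightarrow> real) set" where
  "simplex_weights N = {\<alpha>. (\<forall>i\<in>{1..N}. 0 \<le> \<alpha> i \<and> \<alpha> i \<le> 1) \<and> (\<Sum>i=1..N. \<alpha> i) = 1}"

definition lambda_alpha :: "('x \<Rightarrow> 'g \<Rightarrow> 'a measure) set \<Rightarrow> ('x \<Rightarrow> 'g \<Rightarrow> 'a measure) \<Rightarrow> nat
    \<Rightarrow> (nat \<Rightarrow> ('x \<times> 'g) measure) \<Rightarrow> ('x \<times> 'g) measure \<Rightarrow> (nat \<Rightarrow> real) \<Rightarrow> real" where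
  "lambda_alpha Pol \<pi>G N \<rho>e \<rho>t \<alpha> =
     (INF \<pi>'\<in>Pol. (\<Sum>i=1..N. \<alpha> i * eps (\<rho>e i) \<pi>' \<pi>G) + eps \<rho>t \<pi>' \<pi>G)"

definition delta_E :: "('x \<Rightarrow> 'g \<Rightarrow> 'a measure) set \<Rightarrow> nat \<Rightarrow> (nat \<Rightarrow> ('x \<times> 'g) measure) \<Rightarrow> real" where
  "delta_E Pol N \<rho>e = Max {dPiDeltaPi Pol (\<rho>e i) (\<rho>e j) | i j. i \<in> {1..N} \<and> j \<in> {1..N}}"

end

theory Submission imports Defs begin

text \<open>Fix $\alpha$, a distribution $\rho$ in the characteristic set and a competitor
  $\pi' \in \Pi$. Since $\epsilon^\rho$ is a pseudometric on policies,
  $\epsilon^t(\pi\|\pi_G) \le \epsilon^t(\pi\|\pi') + \epsilon^t(\pi'\|\pi_G)$, and moving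
  from $\rho^t$ to $\rho$ costs $d_{\Pi\Delta\Pi}(\rho,\rho^t)$. Each
  $\epsilon^\rho(\pi\|\pi')$ is bounded by
  $\epsilon^{e_i}(\pi\|\pi_G) + \epsilon^{e_i}(\pi'\|\pi_G) + \delta_E$, because $\rho$
  is $\delta_E$-close to every source; averaging with the weights $\alpha$ and taking
  infima over $\pi'$, $\rho$ and $\alpha$ gives the bound.\<close>

lemma abs_measure_diff_le_1:
  assumes "prob_space \<mu>" "prob_space \<nu>"
  shows "\<bar>measure \<mu> S - measure \<nu> S\<bar> \<le> 1"
  using prob_space.prob_le_1[OF assms(1), of S] prob_space.prob_le_1[OF assms(2), of S]
    measure_nonneg[of \<mu> S] measure_nonneg[of \<nu> S] by linarith

lemma dTV_bdd_above:
  assumes "prob_space \<mu>" "prob_space \<nu>"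
  shows "bdd_above ((\<lambda>S. \<bar>measure \<mu> S - measure \<nu> S\<bar>) ` X)"
  using abs_measure_diff_le_1[OF assms] by (intro bdd_aboveI2[where M=1])

lemma dTV_le_1:
  assumes "prob_space \<mu>" "prob_space \<nu>"
  shows "dTV \<mu> \<nu> \<le> 1"
  unfolding dTV_def
  by (rule cSUP_least) (use sets.empty_sets abs_measure_diff_le_1[OF assms] in blast)+

lemma dTV_upper:
  assumes "prob_space \<mu>" "prob_space \<nu>" "S \<in> sets \<mu>"
  shows "\<bar>measure \<mu> S - measure \<nu> S\<bar> \<le> dTV \<mu> \<nu>"
  unfolding dTV_def by (rule cSUP_upper[OF assms(3) dTV_bdd_above[OF assms(1,2)]])

lemma dTV_nonneg:
  assumes "prob_space \<mu>" "prob_space \<nu>"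
  shows "0 \<le> dTV \<mu> \<nu>"
  using dTV_upper[OF assms sets.empty_sets] by simp

lemma dTV_commute:
  assumes "sets \<mu> = sets \<nu>"
  shows "dTV \<mu> \<nu> = dTV \<nu> \<mu>"
  unfolding dTV_def assms by (simp add: abs_minus_commute)

lemma dTV_triangle:
  assumes "prob_space \<mu>" "prob_space \<nu>" "prob_space \<kappa>" "sets \<mu> = sets \<nu>"
  shows "dTV \<mu> \<kappa> \<le> dTV \<mu> \<nu> + dTV \<nu> \<kappa>"
  unfolding dTV_def[of \<mu> \<kappa>]
proof (rule cSUP_least)
  show "sets \<mu> \<noteq> {}" using sets.empty_sets by blast
  fix S assume S: "S \<in> sets \<mu>"
  have "\<bar>measure \<mu> S - measure \<kappa> S\<bar>
      \<le> \<bar>measure \<mu> S - measure \<nu> S\<bar> + \<bar>measure \<nu> S - measure \<kappa> S\<bar>"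
    by linarith
  also have "\<dots> \<le> dTV \<mu> \<nu> + dTV \<nu> \<kappa>"
    using dTV_upper[OF assms(1,2) S] dTV_upper[OF assms(2,3), of S] S assms(4) by simp
  finally show "\<bar>measure \<mu> S - measure \<kappa> S\<bar> \<le> dTV \<mu> \<nu> + dTV \<nu> \<kappa>" .
qed

lemma le_convex_combination:
  assumes "\<alpha> \<in> simplex_weights N" "\<And>i. i \<in> {1..N} \<Longrightarrow> c \<le> f i"
  shows "c \<le> (\<Sum>i=1..N. \<alpha> i * f i)"
proof -
  have "c = (\<Sum>i=1..N. \<alpha> i * c)"
    using assms(1) by (simp add: simplex_weights_def flip: sum_distrib_right)
  also have "\<dots> \<le> (\<Sum>i=1..N. \<alpha> i * f i)"
    using assms by (intro sum_mono mult_left_mono) (auto simp: simplex_weights_def)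
  finally show ?thesis .
qed

lemma simplex_weights_nonempty:
  assumes "N \<ge> 1"
  shows "simplex_weights N \<noteq> {}"
proof -
  have "(\<lambda>i. if i = 1 then 1 else 0) \<in> simplex_weights N"
    using assms by (auto simp: simplex_weights_def)
  then show ?thesis by blast
qed

lemma le_add_INF:
  fixes f :: "'a \<Rightarrow> real"
  assumes "X \<noteq> {}" "\<And>x. x \<in> X \<Longrightarrow> a \<le> c + f x"
  shows "a \<le> c + (INF x\<in>X. f x)"
proof -
  have "a - c \<le> f x" if "x \<in> X" for x
    using assms(2)[OF that] by linarith
  with assms(1) have "a - c \<le> (INF x\<in>X. f x)"
    by (rule cINF_greatest)
  then show ?thesis by linarith
qed

lemma dPiDeltaPi_le_delta_E:
  assumes "i \<in> {1..N}" "j \<in> {1..N}"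
  shows "dPiDeltaPi Pol (\<rho>e i) (\<rho>e j) \<le> delta_E Pol N \<rho>e"
proof -
  have "{dPiDeltaPi Pol (\<rho>e i) (\<rho>e j) | i j. i \<in> {1..N} \<and> j \<in> {1..N}}
      \<subseteq> (\<lambda>(i, j). dPiDeltaPi Pol (\<rho>e i) (\<rho>e j)) ` ({1..N} \<times> {1..N})"
    by auto
  then have "finite {dPiDeltaPi Pol (\<rho>e i) (\<rho>e j) | i j. i \<in> {1..N} \<and> j \<in> {1..N}}"
    by (rule finite_subset) simp
  then show ?thesis
    unfolding delta_E_def by (rule Max_ge) (use assms in blast)
qed

lemma source_in_char_set:
  assumes "i \<in> {1..N}" "joint_dist XG (\<rho>e i)"
  shows "\<rho>e i \<in> char_set XG Pol (delta_E Pol N \<rho>e) {1..N} \<rho>e"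
  using assms dPiDeltaPi_le_delta_E[of i N _ Pol \<rho>e] unfolding char_set_def by blast

context
  fixes XG :: "('x \<times> 'g) measure" and A :: "'a measure"
    and P :: "('x \<Rightarrow> 'g \<Rightarrow> 'a measure) set"
  assumes policies: "\<forall>\<pi>\<in>P. policy A \<pi>"
    and dTV_measurable: "\<forall>\<pi>1\<in>P. \<forall>\<pi>2\<in>P.
      (\<lambda>p. dTV (\<pi>1 (fst p) (snd p)) (\<pi>2 (fst p) (snd p))) \<in> borel_measurable XG"
begin

lemma policy_prob_space:
  assumes "\<pi> \<in> P"
  shows "prob_space (\<pi> x g)" "sets (\<pi> x g) = sets A"
  using policies assms by (auto simp: policy_def)

lemma dTV_policies_bounds:
  assumes "\<pi>1 \<in> P" "\<pi>2 \<in> P"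
  shows "0 \<le> dTV (\<pi>1 x g) (\<pi>2 x g)" "dTV (\<pi>1 x g) (\<pi>2 x g) \<le> 1"
  by (simp_all add: dTV_nonneg dTV_le_1 policy_prob_space(1) assms)

lemma integrable_dTV:
  assumes "joint_dist XG \<rho>" "\<pi>1 \<in> P" "\<pi>2 \<in> P"
  shows "integrable \<rho> (\<lambda>p. dTV (\<pi>1 (fst p) (snd p)) (\<pi>2 (fst p) (snd p)))"
proof (rule finite_measure.integrable_const_bound[where B=1])
  have \<rho>: "prob_space \<rho>" "sets \<rho> = sets XG"
    using assms(1) by (auto simp: joint_dist_def)
  then show "finite_measure \<rho>" by (simp add: prob_space_def)
  show "AE p in \<rho>. norm (dTV (\<pi>1 (fst p) (snd p)) (\<pi>2 (fst p) (snd p))) \<le> 1"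
    using dTV_policies_bounds[OF assms(2,3)] by simp
  show "(\<lambda>p. dTV (\<pi>1 (fst p) (snd p)) (\<pi>2 (fst p) (snd p))) \<in> borel_measurable \<rho>"
    using dTV_measurable assms(2,3) measurable_cong_sets[OF \<rho>(2) refl] by blast
qed

lemma eps_bounds:
  assumes "joint_dist XG \<rho>" "\<pi>1 \<in> P" "\<pi>2 \<in> P"
  shows "0 \<le> eps \<rho> \<pi>1 \<pi>2" "eps \<rho> \<pi>1 \<pi>2 \<le> 1"
proof -
  have "prob_space \<rho>" using assms(1) by (simp add: joint_dist_def)
  then show "eps \<rho> \<pi>1 \<pi>2 \<le> 1"
    unfolding eps_def
    by (rule prob_space.integral_le_const[OF _ integrable_dTV[OF assms]])
      (use dTV_policies_bounds[OF assms(2,3)] in simp)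
  show "0 \<le> eps \<rho> \<pi>1 \<pi>2"
    unfolding eps_def
    by (rule integral_nonneg_AE) (use dTV_policies_bounds[OF assms(2,3)] in simp)
qed

lemma eps_commute:
  assumes "\<pi>1 \<in> P" "\<pi>2 \<in> P"
  shows "eps \<rho> \<pi>1 \<pi>2 = eps \<rho> \<pi>2 \<pi>1"
proof -
  have "sets (\<pi>1 x g) = sets (\<pi>2 x g)" for x g
    using policy_prob_space(2) assms by simp
  then show ?thesis unfolding eps_def by (simp add: dTV_commute)
qed

lemma eps_triangle:
  assumes "joint_dist XG \<rho>" "\<pi>1 \<in> P" "\<pi>2 \<in> P" "\<pi>3 \<in> P"
  shows "eps \<rho> \<pi>1 \<pi>3 \<le> eps \<rho> \<pi>1 \<pi>2 + eps \<rho> \<pi>2 \<pi>3"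
proof -
  note int12 = integrable_dTV[OF assms(1,2,3)] and int23 = integrable_dTV[OF assms(1,3,4)]
  have "eps \<rho> \<pi>1 \<pi>3 \<le> (\<integral>p. dTV (\<pi>1 (fst p) (snd p)) (\<pi>2 (fst p) (snd p))
                          + dTV (\<pi>2 (fst p) (snd p)) (\<pi>3 (fst p) (snd p)) \<partial>\<rho>)"
    unfolding eps_def
    by (rule integral_mono[OF integrable_dTV[OF assms(1,2,4)]
          Bochner_Integration.integrable_add[OF int12 int23]])
      (rule dTV_triangle; simp add: policy_prob_space assms(2-4))
  also have "\<dots> = eps \<rho> \<pi>1 \<pi>2 + eps \<rho> \<pi>2 \<pi>3"
    unfolding eps_def by (rule Bochner_Integration.integral_add[OF int12 int23])
  finally show ?thesis .
qed

lemma abs_eps_diff_le_dPiDeltaPi: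
  assumes "joint_dist XG \<rho>" "joint_dist XG \<rho>'" "Pol \<subseteq> P" "\<pi>1 \<in> Pol" "\<pi>2 \<in> Pol"
  shows "\<bar>eps \<rho> \<pi>1 \<pi>2 - eps \<rho>' \<pi>1 \<pi>2\<bar> \<le> dPiDeltaPi Pol \<rho> \<rho>'"
proof -
  have bdd: "bdd_above ((\<lambda>pp. \<bar>eps \<rho> (fst pp) (snd pp) - eps \<rho>' (fst pp) (snd pp)\<bar>) ` (Pol \<times> Pol))"
  proof (intro bdd_aboveI2[where M=1])
    fix pp assume "pp \<in> Pol \<times> Pol"
    then have "fst pp \<in> P" "snd pp \<in> P" using assms(3) by auto
    with eps_bounds[OF assms(1)] eps_bounds[OF assms(2)]
    show "\<bar>eps \<rho> (fst pp) (snd pp) - eps \<rho>' (fst pp) (snd pp)\<bar> \<le> 1"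
      by (smt (verit))
  qed
  have "(\<pi>1, \<pi>2) \<in> Pol \<times> Pol" using assms(4,5) by simp
  from cSUP_upper[OF this bdd] show ?thesis
    unfolding dPiDeltaPi_def by simp
qed

lemma eps_le_via_char_set:
  assumes "\<rho> \<in> char_set XG Pol \<delta> {1..N} \<rho>e" "\<forall>i\<in>{1..N}. joint_dist XG (\<rho>e i)"
    and "Pol \<subseteq> P" "\<pi>G \<in> P" "\<pi> \<in> Pol" "\<pi>' \<in> Pol" "i \<in> {1..N}"
  shows "eps \<rho> \<pi> \<pi>' \<le> eps (\<rho>e i) \<pi> \<pi>G + eps (\<rho>e i) \<pi>' \<pi>G + \<delta>"
proof -
  have \<rho>: "joint_dist XG \<rho>" "dPiDeltaPi Pol \<rho> (\<rho>e i) \<le> \<delta>"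
    using assms(1,7) by (auto simp: char_set_def)
  have \<rho>i: "joint_dist XG (\<rho>e i)" using assms(2,7) by blast
  have "eps \<rho> \<pi> \<pi>' \<le> eps (\<rho>e i) \<pi> \<pi>' + dPiDeltaPi Pol \<rho> (\<rho>e i)"
    using abs_eps_diff_le_dPiDeltaPi[OF \<rho>(1) \<rho>i assms(3,5,6)] by linarith
  moreover have "eps (\<rho>e i) \<pi> \<pi>' \<le> eps (\<rho>e i) \<pi> \<pi>G + eps (\<rho>e i) \<pi>' \<pi>G"
    using eps_triangle[OF \<rho>i _ assms(4), of \<pi> \<pi>'] eps_commute[OF assms(4), of \<pi>']
      assms(3,5,6) by auto
  ultimately show ?thesis using \<rho>(2) by linarith
qed

lemma eps_target_le_pointwise:
  assumes "\<alpha> \<in> simplex_weights N" "\<rho> \<in> char_set XG Pol \<delta> {1..N} \<rho>e"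
    and "\<forall>i\<in>{1..N}. joint_dist XG (\<rho>e i)" "joint_dist XG \<rho>t"
    and "Pol \<subseteq> P" "\<pi>G \<in> P" "\<pi> \<in> Pol" "\<pi>' \<in> Pol"
  shows "eps \<rho>t \<pi> \<pi>G \<le> (\<Sum>i=1..N. \<alpha> i * eps (\<rho>e i) \<pi> \<pi>G)
           + ((\<Sum>i=1..N. \<alpha> i * eps (\<rho>e i) \<pi>' \<pi>G) + eps \<rho>t \<pi>' \<pi>G) + \<delta> + dPiDeltaPi Pol \<rho> \<rho>t"
proof -
  have \<rho>: "joint_dist XG \<rho>" using assms(2) by (simp add: char_set_def)
  have "eps \<rho> \<pi> \<pi>' \<le> (\<Sum>i=1..N. \<alpha> i * (eps (\<rho>e i) \<pi> \<pi>G + eps (\<rho>e i) \<pi>' \<pi>G + \<delta>))"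
    by (rule le_convex_combination[OF assms(1) eps_le_via_char_set[OF assms(2,3,5-8)]])
  also have "\<dots> = (\<Sum>i=1..N. \<alpha> i * eps (\<rho>e i) \<pi> \<pi>G)
                  + (\<Sum>i=1..N. \<alpha> i * eps (\<rho>e i) \<pi>' \<pi>G) + \<delta>"
    using assms(1)
    by (simp add: simplex_weights_def distrib_left sum.distrib flip: sum_distrib_right)
  finally have "eps \<rho> \<pi> \<pi>' \<le> \<dots>" .
  moreover have "eps \<rho>t \<pi> \<pi>G \<le> eps \<rho>t \<pi> \<pi>' + eps \<rho>t \<pi>' \<pi>G"
    using eps_triangle[OF assms(4) _ _ assms(6)] assms(5,7,8) by blast
  moreover have "\<bar>eps \<rho> \<pi> \<pi>' - eps \<rho>t \<pi> \<pi>'\<bar> \<le> dPiDeltaPi Pol \<rho> \<rho>t"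
    by (rule abs_eps_diff_le_dPiDeltaPi[OF \<rho> assms(4,5,7,8)])
  ultimately show ?thesis by linarith
qed

lemma eps_target_le_lambda_alpha:
  assumes "\<alpha> \<in> simplex_weights N" "\<rho> \<in> char_set XG Pol \<delta> {1..N} \<rho>e"
    and "\<forall>i\<in>{1..N}. joint_dist XG (\<rho>e i)" "joint_dist XG \<rho>t"
    and "Pol \<subseteq> P" "\<pi>G \<in> P" "\<pi> \<in> Pol"
  shows "eps \<rho>t \<pi> \<pi>G \<le> (\<Sum>i=1..N. \<alpha> i * eps (\<rho>e i) \<pi> \<pi>G)
           + lambda_alpha Pol \<pi>G N \<rho>e \<rho>t \<alpha> + \<delta> + dPiDeltaPi Pol \<rho> \<rho>t"
proof -
  have "eps \<rho>t \<pi> \<pi>G - (\<Sum>i=1..N. \<alpha> i * eps (\<rho>e i) \<pi> \<pi>G) - \<delta> - dPiDeltaPi Pol \<rho> \<rho>t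
      \<le> lambda_alpha Pol \<pi>G N \<rho>e \<rho>t \<alpha>"
    unfolding lambda_alpha_def
  proof (rule cINF_greatest)
    show "Pol \<noteq> {}" using assms(7) by blast
    fix \<pi>' assume "\<pi>' \<in> Pol"
    from eps_target_le_pointwise[OF assms this]
    show "eps \<rho>t \<pi> \<pi>G - (\<Sum>i=1..N. \<alpha> i * eps (\<rho>e i) \<pi> \<pi>G) - \<delta> - dPiDeltaPi Pol \<rho> \<rho>t
        \<le> (\<Sum>i=1..N. \<alpha> i * eps (\<rho>e i) \<pi>' \<pi>G) + eps \<rho>t \<pi>' \<pi>G"
      by linarith
  qed
  then show ?thesis by linarith
qed

end

theorem proposition3:
  fixes XG :: "('x \<times> 'g) measure" and A :: "'a measure"
    and Pol :: "('x \<Rightarrow> 'g \<Rightarrow> 'a measure) set" and \<pi>G :: "'x \<Rightarrow> 'g \<Rightarrow> 'a measure"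
    and N :: nat and \<rho>e :: "nat \<Rightarrow> ('x \<times> 'g) measure" and \<rho>t :: "('x \<times> 'g) measure"
    and \<pi> :: "'x \<Rightarrow> 'g \<Rightarrow> 'a measure"
  assumes N_pos: "N \<ge> 1"
    and src: "\<forall>i\<in>{1..N}. joint_dist XG (\<rho>e i)"
    and tgt: "joint_dist XG \<rho>t"
    and polG: "policy A \<pi>G"
    and polPi: "\<forall>\<pi>'\<in>Pol. policy A \<pi>'"
    and meas: "\<forall>\<pi>1\<in>insert \<pi>G Pol. \<forall>\<pi>2\<in>insert \<pi>G Pol.
                 (\<lambda>p. dTV (\<pi>1 (fst p) (snd p)) (\<pi>2 (fst p) (snd p))) \<in> borel_measurable XG"
    and pi_in: "\<pi> \<in> Pol"
  shows "eps \<rho>t \<pi> \<pi>G \<le>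
           (INF \<alpha>\<in>simplex_weights N.
              (\<Sum>i=1..N. \<alpha> i * eps (\<rho>e i) \<pi> \<pi>G) + lambda_alpha Pol \<pi>G N \<rho>e \<rho>t \<alpha>)
           + delta_E Pol N \<rho>e
           + (INF \<rho>\<in>char_set XG Pol (delta_E Pol N \<rho>e) {1..N} \<rho>e. dPiDeltaPi Pol \<rho> \<rho>t)"
proof -
  define \<delta> where "\<delta> = delta_E Pol N \<rho>e"
  define B where "B = char_set XG Pol \<delta> {1..N} \<rho>e"
  have policies: "\<forall>\<pi>'\<in>insert \<pi>G Pol. policy A \<pi>'" using polG polPi by blast
  have "\<rho>e 1 \<in> B"
    unfolding B_def \<delta>_def by (rule source_in_char_set) (use src N_pos in auto)
  then have B_nonempty: "B \<noteq> {}" by blast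
  have B_bound: "eps \<rho>t \<pi> \<pi>G \<le> (\<Sum>i=1..N. \<alpha> i * eps (\<rho>e i) \<pi> \<pi>G)
      + lambda_alpha Pol \<pi>G N \<rho>e \<rho>t \<alpha> + \<delta> + (INF \<rho>\<in>B. dPiDeltaPi Pol \<rho> \<rho>t)"
    if \<alpha>: "\<alpha> \<in> simplex_weights N" for \<alpha>
    using eps_target_le_lambda_alpha[OF policies meas \<alpha> _ src tgt subset_insertI insertI1 pi_in]
    unfolding B_def by (rule le_add_INF[OF B_nonempty[unfolded B_def]])
  have "eps \<rho>t \<pi> \<pi>G - \<delta> - (INF \<rho>\<in>B. dPiDeltaPi Pol \<rho> \<rho>t) \<le> (INF \<alpha>\<in>simplex_weights N.
      (\<Sum>i=1..N. \<alpha> i * eps (\<rho>e i) \<pi> \<pi>G) + lambda_alpha Pol \<pi>G N \<rho>e \<rho>t \<alpha>)"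
  proof (rule cINF_greatest[OF simplex_weights_nonempty[OF N_pos]])
    fix \<alpha> assume "\<alpha> \<in> simplex_weights N"
    from B_bound[OF this] show "eps \<rho>t \<pi> \<pi>G - \<delta> - (INF \<rho>\<in>B. dPiDeltaPi Pol \<rho> \<rho>t)
        \<le> (\<Sum>i=1..N. \<alpha> i * eps (\<rho>e i) \<pi> \<pi>G) + lambda_alpha Pol \<pi>G N \<rho>e \<rho>t \<alpha>"
      by linarith
  qed
  then show ?thesis unfolding B_def \<delta>_def by linarith
qed

end
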